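(* Let $P$ be a well-ordered phaser and suppose $P\to Q$. Then $P\mathbin{||}Q$, i.e. both $P\unrhd Q$ and $Q\unrhd P$.
   Context: A view is a record $v=(\mathrm{sp}(v),\mathrm{wp}(v),\mathrm{mode}(v))$ with $\mathrm{sp}(v),\mathrm{wp}(v)\in\mathbb{N}$ and $\mathrm{mode}(v)\in\{\mathtt{SW},\mathtt{SO},\mathtt{WO}\}$. For a view or mode, $\mathrm{CanSignal}$ means the mode is $\mathtt{SW}$ or $\mathtt{SO}$, and $\mathrm{CanWait}$ means the mode is $\mathtt{SW}$ or $\mathtt{WO}$. A phaser $P$ is a finite partial map from task identifiers to views. For views, $v_1\unrhd v_2$ iff $\mathrm{mode}(v_1)=\mathtt{WO}$ or $\mathrm{sp}(v_1)\ge\mathrm{wp}(v_2)$ or $\mathrm{mode}(v_2)=\mathtt{SO}$. For phasers, $P\unrhd Q$ iff $P(t)\unrhd Q(t')$ for all $t\in\mathrm{dom}\,P$, $t'\in\mathrm{dom}\,Q$; $P\mathbin{||}Q$ iff $P\unrhd Q$ and $Q\unrhd P$. $P$ is well-ordered iff $P\unrhd P$. Reduction $P\to_t^{o}Q$ is defined by four rules. Signal: if $P(t)=v$, $\mathrm{CanSignal}(v)$, and ($\mathrm{mode}(v)=\mathtt{SW}\Rightarrow\mathrm{wp}(v)=\mathrm{sp}(v)$), then $Q=P[t\mapsto v']$ with $v'$ equal to $v$ except $\mathrm{sp}(v')=\mathrm{sp}(v)+1$. Wait: if $P(t)=v$, $\mathrm{CanWait}(v)$, ($\mathrm{mode}(v)=\mathtt{SW}\Rightarrow\mathrm{wp}(v)+1=\mathrm{sp}(v)$),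 and $\mathrm{Sync}(P,t)$, meaning that every $t'\in\mathrm{dom}\,P$ with $\mathrm{CanSignal}(P(t'))$ has $\mathrm{sp}(P(t'))>\mathrm{wp}(v)$, then $Q=P[t\mapsto v']$ with $v'$ equal to $v$ except $\mathrm{wp}(v')=\mathrm{wp}(v)+1$. Register$(t',r)$: if $t'\notin\mathrm{dom}\,P$, $P(t)=v$, ($\mathrm{CanWait}(r)\Rightarrow\mathrm{CanWait}(v)$) and ($\mathrm{CanSignal}(r)\Rightarrow\mathrm{CanSignal}(v)$), then $Q=P[t'\mapsto(\mathrm{sp}(v),\mathrm{wp}(v),r)]$. Drop: if $t\in\mathrm{dom}\,P$, then $Q$ is $P$ with $t$ removed. $P\to Q$ means $P\to_t^{o}Q$ for some $t,o$. *)

theory Defs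
  imports Main
begin

datatype mode = SW | SO | WO

record view =
  sp :: nat
  wp :: nat
  mode :: mode

definition can_signal_m :: "mode \<Rightarrow> bool" where
  "can_signal_m m \<longleftrightarrow> m = SW \<or> m = SO"
definition can_wait_m :: "mode \<Rightarrow> bool" where
  "can_wait_m m \<longleftrightarrow> m = SW \<or> m = WO"

abbreviation can_signal :: "view \<Rightarrow> bool" where
  "can_signal v \<equiv> can_signal_m (mode v)"
abbreviation can_wait :: "view \<Rightarrow> bool" where
  "can_wait v \<equiv> can_wait_m (mode v)"

type_synonym 'tid phaser = "'tid \<rightharpoonup> view"

definition view_ge :: "view \<Rightarrow> view \<Rightarrow> bool" where
  "view_ge v1 v2 \<longleftrightarrow> mode v1 = WO \<or> sp v1 \<ge> wp v2 \<or> mode v2 = SO"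

definition ph_ge :: "'tid phaser \<Rightarrow> 'tid phaser \<Rightarrow> bool" where
  "ph_ge P Q \<longleftrightarrow> (\<forall>t \<in> dom P. \<forall>t' \<in> dom Q. view_ge (the (P t)) (the (Q t')))"

definition ph_par :: "'tid phaser \<Rightarrow> 'tid phaser \<Rightarrow> bool" where
  "ph_par P Q \<longleftrightarrow> ph_ge P Q \<and> ph_ge Q P"

definition well_ordered :: "'tid phaser \<Rightarrow> bool" where
  "well_ordered P \<longleftrightarrow> ph_ge P P"

definition sync :: "'tid phaser \<Rightarrow> 'tid \<Rightarrow> bool" where
  "sync P t \<longleftrightarrow> (\<forall>t' \<in> dom P. can_signal (the (P t')) \<longrightarrow>
                     sp (the (P t')) > wp (the (P t)))"

datatype 'tid op = Signal | Wait | Register 'tid mode | Drop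

inductive reduces :: "'tid phaser \<Rightarrow> 'tid \<Rightarrow> 'tid op \<Rightarrow> 'tid phaser \<Rightarrow> bool" where
  signal: "\<lbrakk> P t = Some v; can_signal v; mode v = SW \<longrightarrow> wp v = sp v \<rbrakk>
     \<Longrightarrow> reduces P t Signal (P(t \<mapsto> v\<lparr>sp := sp v + 1\<rparr>))"
| wait: "\<lbrakk> P t = Some v; can_wait v; mode v = SW \<longrightarrow> wp v + 1 = sp v; sync P t \<rbrakk>
     \<Longrightarrow> reduces P t Wait (P(t \<mapsto> v\<lparr>wp := wp v + 1\<rparr>))"
| register: "\<lbrakk> t' \<notin> dom P; P t = Some v; can_wait_m r \<longrightarrow> can_wait v;
               can_signal_m r \<longrightarrow> can_signal v \<rbrakk>
     \<Longrightarrow> reduces P t (Register t' r) (P(t' \<mapsto> \<lparr>sp = sp v, wp = wp v, mode = r\<rparr>))"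
| drop: "t \<in> dom P \<Longrightarrow> reduces P t Drop (P(t := None))"

definition step :: "'tid phaser \<Rightarrow> 'tid phaser \<Rightarrow> bool" where
  "step P Q \<longleftrightarrow> (\<exists>t a. reduces P t a Q)"

end

theory Submission
  imports Defs
begin

text \<open>A reduction changes at most one view, and the changed or added view stays mutually
  ordered with every view of \<open>P\<close>: signalling only raises a signal phase; waiting raises
  a wait phase only after every signaller has passed it (\<open>sync\<close>); and a registered view
  copies its parent's phases and may only drop capabilities, which can only weaken the
  constraints it imposes.\<close>

definition view_par :: "view \<Rightarrow> view \<Rightarrow> bool" where
  "view_par v w \<longleftrightarrow> view_ge v w \<and> view_ge w v"

lemma ph_ge_iff_ran: "ph_ge P Q \<longleftrightarrow> (\<forall>u \<in> ran P. \<forall>w \<in> ran Q. view_ge u w)"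
  unfolding ph_ge_def ran_def dom_def by force

lemma well_ordered_iff_ran: "well_ordered P \<longleftrightarrow> (\<forall>u \<in> ran P. \<forall>w \<in> ran P. view_par u w)"
  unfolding well_ordered_def view_par_def ph_ge_iff_ran by blast

lemma ph_par_if_ran_subset_insert:
  assumes "well_ordered P"
    and "ran Q \<subseteq> insert w (ran P)"
    and "\<forall>u \<in> ran P. view_par u w"
  shows "ph_par P Q"
  using assms unfolding ph_par_def ph_ge_iff_ran well_ordered_iff_ran view_par_def by blast

lemma ran_map_upd_subset: "ran (P(t \<mapsto> w)) \<subseteq> insert w (ran P)"
  unfolding ran_def by auto

lemma ran_map_delete_subset: "ran (P(t := None)) \<subseteq> ran P"
  unfolding ran_def by auto

lemma view_par_raise_sp:
  assumes "view_par u v" and "sp v \<le> s"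
  shows "view_par u (v\<lparr>sp := s\<rparr>)"
  using assms unfolding view_par_def view_ge_def by auto

lemma view_par_raise_wp:
  assumes "view_par u v" and "can_signal u \<Longrightarrow> wp v < sp u"
  shows "view_par u (v\<lparr>wp := wp v + 1\<rparr>)"
  using assms unfolding view_par_def view_ge_def can_signal_m_def
  by (cases "mode u") auto

lemma view_par_restrict_mode:
  assumes "view_par u v"
    and "can_wait_m r \<Longrightarrow> can_wait v"
    and "can_signal_m r \<Longrightarrow> can_signal v"
  shows "view_par u \<lparr>sp = sp v, wp = wp v, mode = r\<rparr>"
  using assms unfolding view_par_def view_ge_def can_signal_m_def can_wait_m_def
  by (cases r; cases "mode v") auto

lemma reduces_adds_par_view:
  assumes "reduces P t a Q" and "well_ordered P"
  obtains w where "ran Q \<subseteq> insert w (ran P)" and "\<forall>u \<in> ran P. view_par u w"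
proof -
  have par: "view_par u v" if "u \<in> ran P" "P t = Some v" for u v
    using assms(2) that unfolding well_ordered_iff_ran by (blast intro: ranI)
  from assms(1) show thesis
  proof cases
    case (signal v)
    show thesis
    proof (rule that)
      show "ran Q \<subseteq> insert (v\<lparr>sp := sp v + 1\<rparr>) (ran P)"
        unfolding \<open>Q = P(t \<mapsto> v\<lparr>sp := sp v + 1\<rparr>)\<close> by (rule ran_map_upd_subset)
      show "\<forall>u \<in> ran P. view_par u (v\<lparr>sp := sp v + 1\<rparr>)"
        using signal par view_par_raise_sp by simp
    qed
  next
    case (wait v)
    have passed: "wp v < sp u" if "u \<in> ran P" "can_signal u" for u
      using \<open>sync P t\<close> \<open>P t = Some v\<close> that unfolding sync_def ran_def dom_def by force
    show thesis
    proof (rule that)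
      show "ran Q \<subseteq> insert (v\<lparr>wp := wp v + 1\<rparr>) (ran P)"
        unfolding \<open>Q = P(t \<mapsto> v\<lparr>wp := wp v + 1\<rparr>)\<close> by (rule ran_map_upd_subset)
      show "\<forall>u \<in> ran P. view_par u (v\<lparr>wp := wp v + 1\<rparr>)"
        using \<open>P t = Some v\<close> par passed view_par_raise_wp by blast
    qed
  next
    case (register t' v r)
    show thesis
    proof (rule that)
      show "ran Q \<subseteq> insert \<lparr>sp = sp v, wp = wp v, mode = r\<rparr> (ran P)"
        unfolding \<open>Q = P(t' \<mapsto> \<lparr>sp = sp v, wp = wp v, mode = r\<rparr>)\<close> by (rule ran_map_upd_subset)
      show "\<forall>u \<in> ran P. view_par u \<lparr>sp = sp v, wp = wp v, mode = r\<rparr>"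
        using register par view_par_restrict_mode by simp
    qed
  next
    case drop
    then obtain v where "P t = Some v" by blast
    show thesis
    proof (rule that)
      have "ran Q \<subseteq> ran P"
        unfolding \<open>Q = P(t := None)\<close> by (rule ran_map_delete_subset)
      then show "ran Q \<subseteq> insert v (ran P)" by blast
      show "\<forall>u \<in> ran P. view_par u v"
        using par \<open>P t = Some v\<close> by blast
    qed
  qed
qed

theorem lemma3:
  fixes P Q :: "'tid phaser"
  assumes "finite (dom P)"
    and "well_ordered P"
    and "step P Q"
  shows "ph_par P Q"
proof -
  from \<open>step P Q\<close> obtain t a where "reduces P t a Q"
    unfolding step_def by blast
  then obtain w where "ran Q \<subseteq> insert w (ran P)" and "\<forall>u \<in> ran P. view_par u w"
    using \<open>well_ordered P\<close> by (rule reduces_adds_par_view)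
  with \<open>well_ordered P\<close> show ?thesis
    by (rule ph_par_if_ran_subset_insert)
qed

end
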